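(* Let $A$ be a subalgebra of a $K$-algebra $E$, let $\Delta\subseteq\mathrm{Der}_A(E)$, let $\mathfrak{a}$ be a nonzero $\Delta$-stable ideal of the algebra $N_\Delta(E)$, and let $\mathfrak{a}_0=\mathfrak{a}\cap N_\Delta(E)_0=\mathfrak{a}\cap E^\Delta$. Then: (1) $\mathfrak{a}_0$ is a nonzero ideal of the algebra $N_\Delta(E)_0$, and $\mathfrak{a}'=N_\Delta(E)\mathfrak{a}_0N_\Delta(E)$ is a nonzero ideal of $N_\Delta(E)$ such that $\mathfrak{a}'\subseteq\mathfrak{a}$ and $\mathfrak{a}'\cap N_\Delta(E)_0=\mathfrak{a}_0$. (2) If, in addition, $N_\Delta(E)_0$ is commutative, then $[N_\Delta(E)_1,\mathfrak{a}_0]\subseteq\mathfrak{a}_0$.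
   Context: $\mathrm{Der}_A(E)$ denotes the set of derivations of $E$ that are also (left) $A$-module homomorphisms. For $i\geq 1$, $\Delta^i=\{\delta_1\cdots\delta_i\mid\delta_j\in\Delta\}$; $N_\Delta(E)_i=\{e\in E\mid\Delta^{i+1}e=0\}$ for $i\geq 0$, $N_\Delta(E)=\bigcup_{i\ge0}N_\Delta(E)_i$ (a subalgebra of $E$), and $E^\Delta=\bigcap_{\delta\in\Delta}\ker\delta$. An ideal $\mathfrak{a}$ of $N_\Delta(E)$ is $\Delta$-stable if $\delta(\mathfrak{a})\subseteq\mathfrak{a}$ for all $\delta\in\Delta$. $[x,y]=xy-yx$. *)

theory Defs
  imports Main
begin

definition k_algebra :: "('k::comm_ring_1 \<Rightarrow> 'e::ring_1 \<Rightarrow> 'e) \<Rightarrow> bool" where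
  "k_algebra smul \<longleftrightarrow>
     (\<forall>c x y. smul c (x + y) = smul c x + smul c y) \<and>
     (\<forall>c d x. smul (c + d) x = smul c x + smul d x) \<and>
     (\<forall>c d x. smul (c * d) x = smul c (smul d x)) \<and>
     (\<forall>x. smul 1 x = x) \<and>
     (\<forall>c x y. smul c (x * y) = smul c x * y) \<and>
     (\<forall>c x y. smul c (x * y) = x * smul c y)"

definition subalgebra :: "('k::comm_ring_1 \<Rightarrow> 'e::ring_1 \<Rightarrow> 'e) \<Rightarrow> 'e set \<Rightarrow> bool" where
  "subalgebra smul A \<longleftrightarrow> 0 \<in> A \<and> 1 \<in> A \<and>
     (\<forall>x\<in>A. \<forall>y\<in>A. x + y \<in> A \<and> x * y \<in> A) \<and> (\<forall>x\<in>A. - x \<in> A) \<and>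
     (\<forall>c. \<forall>x\<in>A. smul c x \<in> A)"

definition derivation :: "('k::comm_ring_1 \<Rightarrow> 'e::ring_1 \<Rightarrow> 'e) \<Rightarrow> ('e \<Rightarrow> 'e) \<Rightarrow> bool" where
  "derivation smul \<delta> \<longleftrightarrow>
     (\<forall>x y. \<delta> (x + y) = \<delta> x + \<delta> y) \<and>
     (\<forall>c x. \<delta> (smul c x) = smul c (\<delta> x)) \<and>
     (\<forall>x y. \<delta> (x * y) = \<delta> x * y + x * \<delta> y)"

definition Der :: "('k::comm_ring_1 \<Rightarrow> 'e::ring_1 \<Rightarrow> 'e) \<Rightarrow> 'e set \<Rightarrow> ('e \<Rightarrow> 'e) set" where
  "Der smul A = {\<delta>. derivation smul \<delta> \<and> (\<forall>a\<in>A. \<forall>x. \<delta> (a * x) = a * \<delta> x)}"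

fun Delta_pow :: "('e \<Rightarrow> 'e) set \<Rightarrow> nat \<Rightarrow> ('e \<Rightarrow> 'e) set" where
  "Delta_pow D 0 = {id}"
| "Delta_pow D (Suc i) = {d \<circ> f | d f. d \<in> D \<and> f \<in> Delta_pow D i}"

definition N_part :: "('e::zero \<Rightarrow> 'e) set \<Rightarrow> nat \<Rightarrow> 'e set" where
  "N_part D i = {e. \<forall>f\<in>Delta_pow D (Suc i). f e = 0}"

definition N_Delta :: "('e::zero \<Rightarrow> 'e) set \<Rightarrow> 'e set" where
  "N_Delta D = (\<Union>i. N_part D i)"

definition const_Delta :: "('e::zero \<Rightarrow> 'e) set \<Rightarrow> 'e set" where
  "const_Delta D = {e. \<forall>\<delta>\<in>D. \<delta> e = 0}"

definition Delta_stable :: "('e \<Rightarrow> 'e) set \<Rightarrow> 'e set \<Rightarrow> bool" where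
  "Delta_stable D I \<longleftrightarrow> (\<forall>\<delta>\<in>D. \<delta> ` I \<subseteq> I)"

definition alg_ideal :: "('k::comm_ring_1 \<Rightarrow> 'e::ring_1 \<Rightarrow> 'e) \<Rightarrow> 'e set \<Rightarrow> 'e set \<Rightarrow> bool" where
  "alg_ideal smul S I \<longleftrightarrow> I \<subseteq> S \<and> 0 \<in> I \<and>
     (\<forall>x\<in>I. \<forall>y\<in>I. x + y \<in> I) \<and> (\<forall>x\<in>I. - x \<in> I) \<and>
     (\<forall>c. \<forall>x\<in>I. smul c x \<in> I) \<and>
     (\<forall>s\<in>S. \<forall>x\<in>I. s * x \<in> I \<and> x * s \<in> I)"

text \<open>The product S X S: the K-span of all products s * x * t, s,t in S, x in X.\<close>
inductive_set triple_prod :: "('k::comm_ring_1 \<Rightarrow> 'e::ring_1 \<Rightarrow> 'e) \<Rightarrow> 'e set \<Rightarrow> 'e set \<Rightarrow> 'e set"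
  for smul :: "'k::comm_ring_1 \<Rightarrow> 'e::ring_1 \<Rightarrow> 'e" and S X where
  zero: "0 \<in> triple_prod smul S X"
| gen: "s \<in> S \<Longrightarrow> x \<in> X \<Longrightarrow> t \<in> S \<Longrightarrow> s * x * t \<in> triple_prod smul S X"
| add: "u \<in> triple_prod smul S X \<Longrightarrow> v \<in> triple_prod smul S X \<Longrightarrow> u + v \<in> triple_prod smul S X"
| smul: "u \<in> triple_prod smul S X \<Longrightarrow> smul c u \<in> triple_prod smul S X"

end

theory Submission
  imports Defs
begin

text \<open>The Leibniz rule gives N_i N_j \<subseteq> N_(i+j), so N_Delta(E) is a subalgebra, and so
  is E^Delta = N_0. If x \<noteq> 0 lies in the Delta-stable ideal a and in
  N_(i+1) but not in N_i, some composite of i+1 derivations maps x to a nonzero element, which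
  lies in a by stability and in N_0 since one more derivation kills it; hence a_0 \<noteq> 0. As
  1 is a constant, a_0 lies in the ideal a' it generates, and a' \<subseteq> a gives
  a' \<inter> N_0 = a_0. For (2), a derivation maps [x, y] with y constant to [delta x, y], which
  vanishes once delta x is constant and the constants commute.\<close>

lemma derivationD:
  assumes "derivation smul d"
  shows derivation_add: "d (x + y) = d x + d y"
    and derivation_smul: "d (smul c x) = smul c (d x)"
    and derivation_mult: "d (x * y) = d x * y + x * d y"
  using assms unfolding derivation_def by blast+

lemma derivation_zero: "derivation smul d \<Longrightarrow> d 0 = 0"
  using derivation_add[of smul d 0 0] by simp

lemma derivation_one: "derivation smul d \<Longrightarrow> d 1 = 0"
  using derivation_mult[of smul d 1 1] by simp

lemma derivation_diff: "derivation smul d \<Longrightarrow> d (x - y) = d x - d y"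
  using derivation_add[of smul d "x - y" y] by (simp add: eq_diff_eq)

lemma k_algebra_smul_zero_right: "k_algebra smul \<Longrightarrow> smul c 0 = 0"
  unfolding k_algebra_def by (metis add_cancel_right_right add_0)

lemma k_algebra_smul_minus_one: "k_algebra smul \<Longrightarrow> smul (- 1) x = - x"
  unfolding k_algebra_def by (metis add_cancel_right_right eq_neg_iff_add_eq_0)

lemma k_algebra_mult_smul_commute:
  assumes "k_algebra smul"
  shows "s * smul c u = smul c (s * u)" and "smul c u * s = smul c (u * s)"
  using assms unfolding k_algebra_def by metis+

lemma Delta_pow_Suc_right:
  "Delta_pow D (Suc n) = {f \<circ> d | f d. f \<in> Delta_pow D n \<and> d \<in> D}"
proof (induction n)
  case 0
  show ?case by auto
next
  case (Suc n)
  have "Delta_pow D (Suc (Suc n)) =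
      {d \<circ> (f \<circ> d') | d f d'. d \<in> D \<and> f \<in> Delta_pow D n \<and> d' \<in> D}"
    by (subst Delta_pow.simps, unfold Suc.IH) blast
  also have "\<dots> = {f \<circ> d | f d. f \<in> Delta_pow D (Suc n) \<and> d \<in> D}"
    by (auto simp: comp_assoc) (metis comp_assoc)+
  finally show ?case .
qed

lemma N_part_0_eq_const_Delta: "N_part D 0 = const_Delta D"
  unfolding N_part_def const_Delta_def by auto

lemma mem_N_part_0_iff: "x \<in> N_part D 0 \<longleftrightarrow> (\<forall>d\<in>D. d x = 0)"
  unfolding N_part_0_eq_const_Delta const_Delta_def by simp

lemma mem_N_part_Suc_iff: "x \<in> N_part D (Suc i) \<longleftrightarrow> (\<forall>d\<in>D. d x \<in> N_part D i)"
  unfolding N_part_def Delta_pow_Suc_right[of D "Suc i"] by fastforce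

lemma mem_N_Delta_iff: "x \<in> N_Delta D \<longleftrightarrow> (\<exists>i. x \<in> N_part D i)"
  by (simp add: N_Delta_def)

lemma N_part_subset_N_Delta: "N_part D i \<subseteq> N_Delta D"
  by (auto simp: mem_N_Delta_iff)

lemma Delta_pow_mem_N_part_0:
  assumes "x \<in> N_part D i" and "f \<in> Delta_pow D i"
  shows "f x \<in> N_part D 0"
  unfolding mem_N_part_0_iff
proof
  fix d assume "d \<in> D"
  then have "d \<circ> f \<in> Delta_pow D (Suc i)" using assms(2) by auto
  then show "d (f x) = 0" using assms(1) unfolding N_part_def by fastforce
qed

lemma Delta_stable_Delta_pow:
  assumes "Delta_stable D I" and "f \<in> Delta_pow D n" and "x \<in> I"
  shows "f x \<in> I"
  using assms(2,3)
proof (induction n arbitrary: f)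
  case 0
  then show ?case by simp
next
  case (Suc n)
  then obtain d g where "f = d \<circ> g" "d \<in> D" "g \<in> Delta_pow D n" by auto
  moreover have "g x \<in> I" using Suc.IH \<open>g \<in> Delta_pow D n\<close> Suc.prems(2) .
  ultimately show ?case using assms(1) unfolding Delta_stable_def by auto
qed

lemma subalgebraI:
  assumes "0 \<in> S" and "1 \<in> S"
    and "\<And>x y. x \<in> S \<Longrightarrow> y \<in> S \<Longrightarrow> x + y \<in> S"
    and "\<And>x y. x \<in> S \<Longrightarrow> y \<in> S \<Longrightarrow> x * y \<in> S"
    and "\<And>x. x \<in> S \<Longrightarrow> - x \<in> S"
    and "\<And>c x. x \<in> S \<Longrightarrow> smul c x \<in> S"
  shows "subalgebra smul S"
  unfolding subalgebra_def by (simp add: assms)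

lemma subalgebraD:
  assumes "subalgebra smul S"
  shows subalgebra_zero: "0 \<in> S" and subalgebra_one: "1 \<in> S"
    and subalgebra_add: "x \<in> S \<Longrightarrow> y \<in> S \<Longrightarrow> x + y \<in> S"
    and subalgebra_mult: "x \<in> S \<Longrightarrow> y \<in> S \<Longrightarrow> x * y \<in> S"
    and subalgebra_smul: "x \<in> S \<Longrightarrow> smul c x \<in> S"
  using assms unfolding subalgebra_def by blast+

lemma alg_idealI:
  assumes "I \<subseteq> S" and "0 \<in> I"
    and "\<And>x y. x \<in> I \<Longrightarrow> y \<in> I \<Longrightarrow> x + y \<in> I"
    and "\<And>x. x \<in> I \<Longrightarrow> - x \<in> I"
    and "\<And>c x. x \<in> I \<Longrightarrow> smul c x \<in> I"
    and "\<And>s x. s \<in> S \<Longrightarrow> x \<in> I \<Longrightarrow> s * x \<in> I \<and> x * s \<in> I"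
  shows "alg_ideal smul S I"
  unfolding alg_ideal_def by (simp add: assms)

lemma alg_idealD:
  assumes "alg_ideal smul S I"
  shows alg_ideal_subset: "I \<subseteq> S" and alg_ideal_zero: "0 \<in> I"
    and alg_ideal_add: "x \<in> I \<Longrightarrow> y \<in> I \<Longrightarrow> x + y \<in> I"
    and alg_ideal_uminus: "x \<in> I \<Longrightarrow> - x \<in> I"
    and alg_ideal_smul: "x \<in> I \<Longrightarrow> smul c x \<in> I"
    and alg_ideal_mult_left: "s \<in> S \<Longrightarrow> x \<in> I \<Longrightarrow> s * x \<in> I"
    and alg_ideal_mult_right: "s \<in> S \<Longrightarrow> x \<in> I \<Longrightarrow> x * s \<in> I"
  using assms unfolding alg_ideal_def by blast+

context
  fixes smul :: "'k::comm_ring_1 \<Rightarrow> 'e::ring_1 \<Rightarrow> 'e" and D :: "('e \<Rightarrow> 'e) set"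
  assumes derivations: "\<And>d. d \<in> D \<Longrightarrow> derivation smul d"
begin

lemma zero_mem_N_part: "0 \<in> N_part D i"
  by (induction i) (auto simp: mem_N_part_0_iff mem_N_part_Suc_iff derivation_zero[OF derivations])

lemma add_mem_N_part: "x \<in> N_part D i \<Longrightarrow> y \<in> N_part D i \<Longrightarrow> x + y \<in> N_part D i"
  by (induction i arbitrary: x y) (auto simp: mem_N_part_0_iff mem_N_part_Suc_iff derivation_add[OF derivations])

lemma smul_mem_N_part:
  assumes "k_algebra smul"
  shows "x \<in> N_part D i \<Longrightarrow> smul c x \<in> N_part D i"
  by (induction i arbitrary: x)
    (auto simp: mem_N_part_0_iff mem_N_part_Suc_iff derivation_smul[OF derivations]
      k_algebra_smul_zero_right[OF assms])

lemma N_part_Suc_mono: "N_part D i \<subseteq> N_part D (Suc i)"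
  unfolding N_part_def by (fastforce simp: derivation_zero[OF derivations])

lemma N_part_mono: "i \<le> j \<Longrightarrow> N_part D i \<subseteq> N_part D j"
  using lift_Suc_mono_le[of "N_part D", OF N_part_Suc_mono] .

lemma mult_mem_N_part:
  "x \<in> N_part D i \<Longrightarrow> y \<in> N_part D j \<Longrightarrow> x * y \<in> N_part D (i + j)"
proof (induction "i + j" arbitrary: i j x y)
  case 0
  then show ?case by (force simp: mem_N_part_0_iff derivation_mult[OF derivations])
next
  case (Suc n)
  have "d x * y \<in> N_part D n" if "d \<in> D" for d
  proof (cases i)
    case 0
    with Suc.prems \<open>d \<in> D\<close> have "d x = 0" by (force simp: mem_N_part_0_iff)
    then show ?thesis by (simp add: zero_mem_N_part)
  next
    case (Suc i')
    then show ?thesis using Suc.hyps(1)[of i' j] Suc.hyps(2) Suc.prems \<open>d \<in> D\<close>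
      by (simp add: mem_N_part_Suc_iff)
  qed
  moreover have "x * d y \<in> N_part D n" if "d \<in> D" for d
  proof (cases j)
    case 0
    with Suc.prems \<open>d \<in> D\<close> have "d y = 0" by (force simp: mem_N_part_0_iff)
    then show ?thesis by (simp add: zero_mem_N_part)
  next
    case (Suc j')
    then show ?thesis using Suc.hyps(1)[of i j'] Suc.hyps(2) Suc.prems \<open>d \<in> D\<close>
      by (simp add: mem_N_part_Suc_iff)
  qed
  ultimately show ?case
    unfolding Suc.hyps(2)[symmetric] mem_N_part_Suc_iff
    by (simp add: derivation_mult[OF derivations] add_mem_N_part)
qed

lemma uminus_mem_N_part:
  assumes "k_algebra smul" and "x \<in> N_part D i"
  shows "- x \<in> N_part D i"
  using smul_mem_N_part[OF assms] k_algebra_smul_minus_one[OF assms(1)] by metis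

lemma one_mem_N_part_0: "1 \<in> N_part D 0"
  by (simp add: mem_N_part_0_iff derivation_one[OF derivations])

lemma subalgebra_const_Delta:
  assumes "k_algebra smul"
  shows "subalgebra smul (const_Delta D)"
  unfolding N_part_0_eq_const_Delta[symmetric]
proof (rule subalgebraI)
  show "x * y \<in> N_part D 0" if "x \<in> N_part D 0" "y \<in> N_part D 0" for x y
    using mult_mem_N_part[OF that] by simp
qed (simp_all add: zero_mem_N_part one_mem_N_part_0 add_mem_N_part
      uminus_mem_N_part[OF assms] smul_mem_N_part[OF assms])

lemma subalgebra_N_Delta:
  assumes "k_algebra smul"
  shows "subalgebra smul (N_Delta D)"
proof (rule subalgebraI)
  show "x + y \<in> N_Delta D" if "x \<in> N_Delta D" "y \<in> N_Delta D" for x y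
  proof -
    obtain i j where "x \<in> N_part D i" "y \<in> N_part D j"
      using \<open>x \<in> N_Delta D\<close> \<open>y \<in> N_Delta D\<close> by (auto simp: mem_N_Delta_iff)
    then have "x + y \<in> N_part D (max i j)"
      using N_part_mono[of i "max i j"] N_part_mono[of j "max i j"] by (auto intro: add_mem_N_part)
    then show ?thesis by (auto simp: mem_N_Delta_iff)
  qed
  show "x * y \<in> N_Delta D" if "x \<in> N_Delta D" "y \<in> N_Delta D" for x y
  proof -
    obtain i j where "x \<in> N_part D i" "y \<in> N_part D j"
      using \<open>x \<in> N_Delta D\<close> \<open>y \<in> N_Delta D\<close> by (auto simp: mem_N_Delta_iff)
    then have "x * y \<in> N_part D (i + j)" by (rule mult_mem_N_part)
    then show ?thesis by (auto simp: mem_N_Delta_iff)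
  qed
qed (auto simp: mem_N_Delta_iff zero_mem_N_part
      intro: one_mem_N_part_0 uminus_mem_N_part[OF assms] smul_mem_N_part[OF assms])

lemma commutator_mem_N_part_0:
  assumes commutative: "\<forall>x\<in>N_part D 0. \<forall>y\<in>N_part D 0. x * y = y * x"
    and "x \<in> N_part D 1" and "y \<in> N_part D 0"
  shows "x * y - y * x \<in> N_part D 0"
  unfolding mem_N_part_0_iff
proof
  fix d assume "d \<in> D"
  then have "d x \<in> N_part D 0" and "d y = 0"
    using assms(2,3) by (simp_all add: mem_N_part_Suc_iff mem_N_part_0_iff)
  have "d (x * y - y * x) = d x * y - y * d x"
    using \<open>d y = 0\<close> derivations[OF \<open>d \<in> D\<close>] by (simp add: derivation_diff derivation_mult)
  also have "\<dots> = 0"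
    using commutative \<open>d x \<in> N_part D 0\<close> assms(3) by simp
  finally show "d (x * y - y * x) = 0" .
qed

end

lemma Delta_stable_ex_nonzero_N_part_0:
  assumes "Delta_stable D I" and "x \<in> I" and "x \<noteq> 0" and "x \<in> N_part D i"
  shows "\<exists>y\<in>I \<inter> N_part D 0. y \<noteq> 0"
  using assms(2-4)
proof (induction i arbitrary: x)
  case 0
  then show ?case by blast
next
  case (Suc i)
  show ?case
  proof (cases "x \<in> N_part D i")
    case True
    then show ?thesis using Suc by blast
  next
    case False
    then obtain f where f: "f \<in> Delta_pow D (Suc i)" and "f x \<noteq> 0"
      unfolding N_part_def by blast
    have "f x \<in> I" using Delta_stable_Delta_pow[OF assms(1) f \<open>x \<in> I\<close>] .
    moreover have "f x \<in> N_part D 0" using Delta_pow_mem_N_part_0[OF Suc.prems(3) f] .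
    ultimately show ?thesis using \<open>f x \<noteq> 0\<close> by blast
  qed
qed

lemma Delta_stable_Int_N_part_0_nonzero:
  assumes "Delta_stable D I" and "I \<subseteq> N_Delta D" and "0 \<in> I" and "I \<noteq> {0}"
  shows "I \<inter> N_part D 0 \<noteq> {0}"
proof -
  obtain x where "x \<in> I" "x \<noteq> 0" using assms(3,4) by blast
  moreover obtain i where "x \<in> N_part D i"
    using \<open>x \<in> I\<close> assms(2) mem_N_Delta_iff by blast
  ultimately show ?thesis using Delta_stable_ex_nonzero_N_part_0[OF assms(1)] by blast
qed

lemma alg_ideal_Int_subalgebra:
  assumes "alg_ideal smul S I" and "subalgebra smul R" and "R \<subseteq> S"
  shows "alg_ideal smul R (I \<inter> R)"
  using assms unfolding alg_ideal_def subalgebra_def by blast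

lemma alg_ideal_commutator:
  assumes "alg_ideal smul S I" and "s \<in> S" and "x \<in> I"
  shows "s * x - x * s \<in> I"
  using alg_ideal_add[OF assms(1) alg_ideal_mult_left[OF assms] alg_ideal_uminus[OF assms(1)
      alg_ideal_mult_right[OF assms]]] by simp

lemma subset_triple_prod:
  assumes "1 \<in> S"
  shows "X \<subseteq> triple_prod smul S X"
  using triple_prod.gen[OF assms _ assms] by fastforce

lemma triple_prod_subset_ideal:
  assumes "alg_ideal smul S I" and "X \<subseteq> I"
  shows "triple_prod smul S X \<subseteq> I"
proof
  fix u assume "u \<in> triple_prod smul S X"
  then show "u \<in> I"
    by induction (use assms in \<open>auto intro: alg_idealD\<close>)
qed

lemma triple_prod_subset:
  assumes sub: "subalgebra smul S" and "X \<subseteq> S"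
  shows "triple_prod smul S X \<subseteq> S"
proof
  fix u assume "u \<in> triple_prod smul S X"
  then show "u \<in> S"
    by induction (use assms in \<open>auto intro: subalgebraD\<close>)
qed

lemma mult_mem_triple_prod:
  assumes alg: "k_algebra smul" and sub: "subalgebra smul S"
    and "u \<in> triple_prod smul S X" and "s \<in> S"
  shows "s * u \<in> triple_prod smul S X \<and> u * s \<in> triple_prod smul S X"
  using assms(3)
proof induction
  case zero
  then show ?case by (simp add: triple_prod.zero)
next
  case (gen s' x t)
  have "s * s' \<in> S" and "t * s \<in> S"
    using gen.hyps \<open>s \<in> S\<close> by (simp_all add: subalgebra_mult[OF sub])
  then have "(s * s') * x * t \<in> triple_prod smul S X" and "s' * x * (t * s) \<in> triple_prod smul S X"
    using gen.hyps by (simp_all add: triple_prod.gen)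
  then show ?case by (simp add: mult.assoc)
next
  case (add u v)
  then show ?case by (simp add: distrib_left distrib_right triple_prod.add)
next
  case (smul u c)
  then have "smul c (s * u) \<in> triple_prod smul S X" and "smul c (u * s) \<in> triple_prod smul S X"
    by (blast intro: triple_prod.smul)+
  then show ?case by (simp add: k_algebra_mult_smul_commute[OF alg])
qed

lemma alg_ideal_triple_prod:
  assumes alg: "k_algebra smul" and sub: "subalgebra smul S" and "X \<subseteq> S"
  shows "alg_ideal smul S (triple_prod smul S X)"
proof (rule alg_idealI)
  show "triple_prod smul S X \<subseteq> S" using sub \<open>X \<subseteq> S\<close> by (rule triple_prod_subset)
  show "0 \<in> triple_prod smul S X" by (rule triple_prod.zero)
  show "x + y \<in> triple_prod smul S X" if "x \<in> triple_prod smul S X" "y \<in> triple_prod smul S X" for x y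
    using that by (rule triple_prod.add)
  show "- u \<in> triple_prod smul S X" if "u \<in> triple_prod smul S X" for u
    using triple_prod.smul[OF that, of "- 1"] by (simp add: k_algebra_smul_minus_one[OF alg])
  show "smul c u \<in> triple_prod smul S X" if "u \<in> triple_prod smul S X" for c u
    using that by (rule triple_prod.smul)
  show "s * u \<in> triple_prod smul S X \<and> u * s \<in> triple_prod smul S X"
    if "s \<in> S" "u \<in> triple_prod smul S X" for s u
    using mult_mem_triple_prod[OF alg sub that(2,1)] .
qed

theorem theorem1p6:
  fixes smul :: "'k::comm_ring_1 \<Rightarrow> 'e::ring_1 \<Rightarrow> 'e"
    and A :: "'e set" and \<Delta> :: "('e \<Rightarrow> 'e) set" and \<aa> :: "'e set"
  assumes alg: "k_algebra smul"
    and sub: "subalgebra smul A"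
    and Der: "\<Delta> \<subseteq> Der smul A"
    and ideal: "alg_ideal smul (N_Delta \<Delta>) \<aa>"
    and nonzero: "\<aa> \<noteq> {0}"
    and stable: "Delta_stable \<Delta> \<aa>"
  shows "\<aa> \<inter> N_part \<Delta> 0 = \<aa> \<inter> const_Delta \<Delta>
    \<and> alg_ideal smul (N_part \<Delta> 0) (\<aa> \<inter> N_part \<Delta> 0)
    \<and> \<aa> \<inter> N_part \<Delta> 0 \<noteq> {0}
    \<and> alg_ideal smul (N_Delta \<Delta>) (triple_prod smul (N_Delta \<Delta>) (\<aa> \<inter> N_part \<Delta> 0))
    \<and> triple_prod smul (N_Delta \<Delta>) (\<aa> \<inter> N_part \<Delta> 0) \<noteq> {0}
    \<and> triple_prod smul (N_Delta \<Delta>) (\<aa> \<inter> N_part \<Delta> 0) \<subseteq> \<aa>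
    \<and> triple_prod smul (N_Delta \<Delta>) (\<aa> \<inter> N_part \<Delta> 0) \<inter> N_part \<Delta> 0 = \<aa> \<inter> N_part \<Delta> 0
    \<and> ((\<forall>x\<in>N_part \<Delta> 0. \<forall>y\<in>N_part \<Delta> 0. x * y = y * x) \<longrightarrow>
         (\<forall>x\<in>N_part \<Delta> 1. \<forall>y\<in>\<aa> \<inter> N_part \<Delta> 0. x * y - y * x \<in> \<aa> \<inter> N_part \<Delta> 0))"
proof -
  have derivations: "\<And>d. d \<in> \<Delta> \<Longrightarrow> derivation smul d" using Der unfolding Der_def by blast
  let ?N = "N_Delta \<Delta>" and ?a0 = "\<aa> \<inter> N_part \<Delta> 0"
  let ?T = "triple_prod smul ?N ?a0"
  have N_sub: "subalgebra smul ?N" by (rule subalgebra_N_Delta[OF derivations alg])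
  have N0_sub: "subalgebra smul (N_part \<Delta> 0)"
    using subalgebra_const_Delta[OF derivations alg] by (simp add: N_part_0_eq_const_Delta)
  have a0_ideal: "alg_ideal smul (N_part \<Delta> 0) ?a0"
    by (rule alg_ideal_Int_subalgebra[OF ideal N0_sub N_part_subset_N_Delta])
  have a0_nonzero: "?a0 \<noteq> {0}"
    using Delta_stable_Int_N_part_0_nonzero[OF stable alg_ideal_subset[OF ideal]
        alg_ideal_zero[OF ideal] nonzero] .
  have "?a0 \<subseteq> ?T" by (rule subset_triple_prod[OF subalgebra_one[OF N_sub]])
  moreover have "?T \<subseteq> \<aa>" by (rule triple_prod_subset_ideal[OF ideal]) blast
  moreover have "alg_ideal smul ?N ?T"
    by (rule alg_ideal_triple_prod[OF alg N_sub]) (use N_part_subset_N_Delta in blast)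
  moreover have "x * y - y * x \<in> ?a0"
    if "\<forall>x\<in>N_part \<Delta> 0. \<forall>y\<in>N_part \<Delta> 0. x * y = y * x"
      and "x \<in> N_part \<Delta> 1" and "y \<in> ?a0" for x y
    using alg_ideal_commutator[OF ideal subsetD[OF N_part_subset_N_Delta that(2)]]
      commutator_mem_N_part_0[OF derivations that(1,2)] \<open>y \<in> ?a0\<close> by blast
  ultimately show ?thesis
    using a0_ideal a0_nonzero alg_ideal_zero[OF a0_ideal] by (auto simp: N_part_0_eq_const_Delta)
qed

end
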